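(* A function quasi-norm $\rho$ over a $\sigma$-finite measure space $(\Omega,\Sigma,\mu)$ is locally dominating if and only if $\lim_{t\to0^+}\Phi[E,\rho](t)=0$ for every $E\in\Sigma$ with $\mu(E)<\infty$, where $\Phi[E,\rho](t)=\sup\{\rho(\chi_A):A\in\Sigma,\ A\subseteq E,\ \mu(A)\le t\}$.
   Context: $L_0^+(\mu)$: measurable functions $\Omega\to[0,\infty]$ modulo a.e. equality. A function quasi-norm is $\rho\colon L_0^+(\mu)\to[0,\infty]$ with (F1) $\rho(tf)=t\rho(f)$, $t\ge0$; (F2) $f\le g$ a.e. $\Rightarrow\rho(f)\le\rho(g)$; (F3) $\rho(\chi_E)<\infty$ if $\mu(E)<\infty$; (F4) for all $E$ with $\mu(E)<\infty$ and $\varepsilon>0$ there is $\delta>0$ with $\mu(A)\le\varepsilon$ whenever $A\subseteq E$ measurable and $\rho(\chi_A)\le\delta$; (F5) $\rho(f+g)\le\kappa(\rho(f)+\rho(g))$. $f\in L_0^+(\mu)$ with $\rho(f)<\infty$ is dominating if $\lim_n\rho(f_n)=0$ for every non-increasing $(f_n)$ in $L_0^+(\mu)$ with $f_1\le f$ and $\lim_nf_n=0$. $\rho$ is locally dominating if $\chi_E$ is dominating for every $E\in\Sigma$ with $\mu(E)<\infty$. *)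

theory Defs
  imports "HOL-Analysis.Analysis"
begin

text \<open>Elements of L_0^+(mu) are represented by Borel measurable functions into ennreal;
  the quasi-norm is only constrained on such functions, and (F2) with a.e. ordering
  makes it invariant under a.e. equality.\<close>

definition function_quasi_norm :: "'a measure \<Rightarrow> (('a \<Rightarrow> ennreal) \<Rightarrow> ennreal) \<Rightarrow> bool" where
  "function_quasi_norm M \<rho> \<longleftrightarrow>
     \<comment> \<open>(F1)\<close>
     (\<forall>f \<in> borel_measurable M. \<forall>t::real. t \<ge> 0 \<longrightarrow>
        \<rho> (\<lambda>x. ennreal t * f x) = ennreal t * \<rho> f) \<and>
     \<comment> \<open>(F2)\<close>
     (\<forall>f \<in> borel_measurable M. \<forall>g \<in> borel_measurable M.
        (AE x in M. f x \<le> g x) \<longrightarrow> \<rho> f \<le> \<rho> g) \<and>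
     \<comment> \<open>(F3)\<close>
     (\<forall>E \<in> sets M. emeasure M E < \<infinity> \<longrightarrow> \<rho> (indicator E) < \<infinity>) \<and>
     \<comment> \<open>(F4)\<close>
     (\<forall>E \<in> sets M. emeasure M E < \<infinity> \<longrightarrow>
        (\<forall>\<epsilon>::real. \<epsilon> > 0 \<longrightarrow> (\<exists>\<delta>::real. \<delta> > 0 \<and>
           (\<forall>A \<in> sets M. A \<subseteq> E \<and> \<rho> (indicator A) \<le> ennreal \<delta> \<longrightarrow>
              emeasure M A \<le> ennreal \<epsilon>)))) \<and>
     \<comment> \<open>(F5)\<close>
     (\<exists>\<kappa>::real. \<kappa> \<ge> 1 \<and>
        (\<forall>f \<in> borel_measurable M. \<forall>g \<in> borel_measurable M.
           \<rho> (\<lambda>x. f x + g x) \<le> ennreal \<kappa> * (\<rho> f + \<rho> g)))"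

definition dominating :: "'a measure \<Rightarrow> (('a \<Rightarrow> ennreal) \<Rightarrow> ennreal) \<Rightarrow> ('a \<Rightarrow> ennreal) \<Rightarrow> bool" where
  "dominating M \<rho> f \<longleftrightarrow> f \<in> borel_measurable M \<and> \<rho> f < \<infinity> \<and>
     (\<forall>fs :: nat \<Rightarrow> 'a \<Rightarrow> ennreal.
        (\<forall>n. fs n \<in> borel_measurable M) \<and>
        (AE x in M. \<forall>n. fs (Suc n) x \<le> fs n x) \<and>
        (AE x in M. fs 0 x \<le> f x) \<and>
        (AE x in M. (\<lambda>n. fs n x) \<longlonglongrightarrow> 0)
        \<longrightarrow> (\<lambda>n. \<rho> (fs n)) \<longlonglongrightarrow> 0)"

definition locally_dominating :: "'a measure \<Rightarrow> (('a \<Rightarrow> ennreal) \<Rightarrow> ennreal) \<Rightarrow> bool" where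
  "locally_dominating M \<rho> \<longleftrightarrow>
     (\<forall>E \<in> sets M. emeasure M E < \<infinity> \<longrightarrow> dominating M \<rho> (indicator E))"

definition Phi :: "'a measure \<Rightarrow> 'a set \<Rightarrow> (('a \<Rightarrow> ennreal) \<Rightarrow> ennreal) \<Rightarrow> real \<Rightarrow> ennreal" where
  "Phi M E \<rho> t = (SUP A \<in> {A \<in> sets M. A \<subseteq> E \<and> emeasure M A \<le> ennreal t}. \<rho> (indicator A))"

end

theory Submission imports Defs begin

(* If Phi[E,rho] does not vanish at 0+, there are A_n in E with mu(A_n) <= 2^-n and
   rho(chi_(A_n)) bounded below.  By Borel-Cantelli the tails B_n (the union of the A_k, k >= n)
   decrease to a null set, so chi_(B_n) is a non-increasing sequence below chi_E tending to 0
   a.e., while rho(chi_(B_n)) >= rho(chi_(A_n)) does not tend to 0: chi_E is not dominating.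
   Conversely, let chi_E >= f_n decrease to 0 a.e. and eta > 0.  Then
   f_n <= eta chi_E + chi_(A_n) with A_n = {x in E. f_n x > eta}.  As mu(E) < oo, mu(A_n) -> 0,
   and rho(chi_(A_n)) <= Phi[E,rho](t) once mu(A_n) <= t, so rho(chi_(A_n)) -> 0.  The
   quasi-triangle inequality then bounds lim sup rho(f_n) by kappa eta rho(chi_E), which is
   arbitrarily small. *)

lemma function_quasi_norm_homogeneous:
  assumes "function_quasi_norm M \<rho>" "f \<in> borel_measurable M" "t \<ge> 0"
  shows "\<rho> (\<lambda>x. ennreal t * f x) = ennreal t * \<rho> f"
  using assms(1)[unfolded function_quasi_norm_def, THEN conjunct1] assms(2,3) by blast

lemma function_quasi_norm_mono:
  assumes "function_quasi_norm M \<rho>" "f \<in> borel_measurable M" "g \<in> borel_measurable M"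
    and "AE x in M. f x \<le> g x"
  shows "\<rho> f \<le> \<rho> g"
  using assms(1)[unfolded function_quasi_norm_def, THEN conjunct2, THEN conjunct1] assms(2-4)
  by blast

lemma function_quasi_norm_indicator_finite:
  assumes "function_quasi_norm M \<rho>" "E \<in> sets M" "emeasure M E < \<infinity>"
  shows "\<rho> (indicator E) < \<infinity>"
  using assms(1)[unfolded function_quasi_norm_def, THEN conjunct2, THEN conjunct2, THEN conjunct1]
    assms(2,3)
  by blast

lemma function_quasi_norm_quasi_triangle:
  assumes "function_quasi_norm M \<rho>"
  obtains \<kappa> :: real where "\<kappa> \<ge> 1"
    "\<And>f g. f \<in> borel_measurable M \<Longrightarrow> g \<in> borel_measurable M \<Longrightarrow>
       \<rho> (\<lambda>x. f x + g x) \<le> ennreal \<kappa> * (\<rho> f + \<rho> g)"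
  using assms[unfolded function_quasi_norm_def, THEN conjunct2, THEN conjunct2, THEN conjunct2,
      THEN conjunct2] that
  by blast

lemma dominatingI:
  assumes "f \<in> borel_measurable M" "\<rho> f < \<infinity>"
    and "\<And>fs. (\<And>n. fs n \<in> borel_measurable M) \<Longrightarrow> AE x in M. \<forall>n. fs (Suc n) x \<le> fs n x \<Longrightarrow>
      AE x in M. fs 0 x \<le> f x \<Longrightarrow> AE x in M. (\<lambda>n. fs n x) \<longlonglongrightarrow> 0 \<Longrightarrow> (\<lambda>n. \<rho> (fs n)) \<longlonglongrightarrow> 0"
  shows "dominating M \<rho> f"
  unfolding dominating_def using assms(1,2) by (blast intro: assms(3))

lemma dominatingD:
  assumes "dominating M \<rho> f" "\<And>n. fs n \<in> borel_measurable M"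
    and "AE x in M. \<forall>n. fs (Suc n) x \<le> fs n x" "AE x in M. fs 0 x \<le> f x"
    and "AE x in M. (\<lambda>n. fs n x) \<longlonglongrightarrow> 0"
  shows "(\<lambda>n. \<rho> (fs n)) \<longlonglongrightarrow> 0"
  using assms unfolding dominating_def by blast

lemma Phi_mono: "s \<le> t \<Longrightarrow> Phi M E \<rho> s \<le> Phi M E \<rho> t"
  unfolding Phi_def by (rule SUP_subset_mono) (auto intro: order_trans ennreal_leI)

lemma indicator_le_Phi:
  "A \<in> sets M \<Longrightarrow> A \<subseteq> E \<Longrightarrow> emeasure M A \<le> ennreal t \<Longrightarrow> \<rho> (indicator A) \<le> Phi M E \<rho> t"
  unfolding Phi_def by (rule SUP_upper) simp

lemma ennreal_Lim_null_comparison: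
  fixes f g :: "'b \<Rightarrow> ennreal"
  assumes "\<And>x. f x \<le> g x" "(g \<longlongrightarrow> 0) F"
  shows "(f \<longlongrightarrow> 0) F"
  by (rule tendsto_sandwich[OF always_eventually always_eventually tendsto_const assms(2)])
    (simp_all add: assms(1))

lemma emeasure_tendsto_0_AE_eventually_notin:
  assumes [measurable]: "\<And>n. A n \<in> sets M" and "E \<in> sets M" "\<And>n. A n \<subseteq> E" "emeasure M E < \<infinity>"
    and "AE x in M. eventually (\<lambda>n. x \<notin> A n) sequentially"
  shows "(\<lambda>n. emeasure M (A n)) \<longlonglongrightarrow> 0"
proof -
  define B where "B n = (\<Union>k\<in>{n..}. A k)" for n
  have B_sets: "range B \<subseteq> sets M"
    unfolding B_def by auto
  have "decseq B"
    unfolding B_def decseq_def by (auto intro: order_trans)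
  moreover have "emeasure M (B n) \<noteq> \<infinity>" for n
  proof -
    have "B n \<subseteq> E"
      unfolding B_def using assms(3) by auto
    then have "emeasure M (B n) \<le> emeasure M E"
      using assms(2) by (rule emeasure_mono)
    then show ?thesis
      using assms(4) by (auto intro: neq_top_trans)
  qed
  ultimately have "(\<lambda>n. emeasure M (B n)) \<longlonglongrightarrow> emeasure M (\<Inter>n. B n)"
    using B_sets by (intro Lim_emeasure_decseq)
  moreover have "(\<Inter>n. B n) = limsup A"
    unfolding B_def limsup_INF_SUP by auto
  moreover have "limsup A \<in> null_sets M"
    using assms(5) by (auto simp: limsup_INF_SUP eventually_sequentially AE_iff_null_sets)
  ultimately have B_lim: "(\<lambda>n. emeasure M (B n)) \<longlonglongrightarrow> 0"
    by (simp add: null_setsD1)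
  have "emeasure M (A n) \<le> emeasure M (B n)" for n
    using B_sets unfolding B_def by (intro emeasure_mono) auto
  then show ?thesis
    using B_lim by (rule ennreal_Lim_null_comparison)
qed

lemma tendsto_0_at_right_0_ex_less:
  fixes f :: "real \<Rightarrow> ennreal"
  assumes "(f \<longlongrightarrow> 0) (at_right 0)" "0 < a"
  obtains t where "0 < t" "f t < a"
proof -
  have "eventually (\<lambda>t. 0 < t \<and> f t < a) (at_right 0)"
    using eventually_at_right_less order_tendstoD(2)[OF assms] by (rule eventually_conj)
  then show ?thesis
    using eventually_happens'[OF trivial_limit_at_right_real] that by blast
qed

lemma Phi_tendsto_0_iff:
  "(Phi M E \<rho> \<longlongrightarrow> 0) (at_right 0) \<longleftrightarrow> (\<forall>a>0. \<exists>t>0. Phi M E \<rho> t < a)"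
proof
  assume "(Phi M E \<rho> \<longlongrightarrow> 0) (at_right 0)"
  then show "\<forall>a>0. \<exists>t>0. Phi M E \<rho> t < a"
    by (metis tendsto_0_at_right_0_ex_less)
next
  assume small: "\<forall>a>0. \<exists>t>0. Phi M E \<rho> t < a"
  show "(Phi M E \<rho> \<longlongrightarrow> 0) (at_right 0)"
  proof (rule order_tendstoI)
    fix a :: ennreal
    assume "0 < a"
    then obtain t where "0 < t" "Phi M E \<rho> t < a"
      using small by blast
    then show "eventually (\<lambda>s. Phi M E \<rho> s < a) (at_right 0)"
      unfolding eventually_at_right_field by (metis Phi_mono le_less_trans less_imp_le)
  qed simp
qed

lemma indicator_tendsto_0_if_Phi_tendsto_0:
  assumes "(Phi M E \<rho> \<longlongrightarrow> 0) (at_right 0)"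
    and "\<And>n. A n \<in> sets M" "\<And>n. A n \<subseteq> E" "(\<lambda>n. emeasure M (A n)) \<longlonglongrightarrow> 0"
  shows "(\<lambda>n. \<rho> (indicator (A n))) \<longlonglongrightarrow> 0"
proof (rule order_tendstoI)
  fix a :: ennreal
  assume "0 < a"
  with assms(1) obtain t where "0 < t" "Phi M E \<rho> t < a"
    by (rule tendsto_0_at_right_0_ex_less)
  have "eventually (\<lambda>n. emeasure M (A n) < ennreal t) sequentially"
    using order_tendstoD(2)[OF assms(4)] \<open>0 < t\<close> by simp
  then show "eventually (\<lambda>n. \<rho> (indicator (A n)) < a) sequentially"
  proof eventually_elim
    case (elim n)
    then have "\<rho> (indicator (A n)) \<le> Phi M E \<rho> t"
      using assms(2,3) by (intro indicator_le_Phi) auto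
    then show ?case
      using \<open>Phi M E \<rho> t < a\<close> by (rule le_less_trans)
  qed
qed simp

lemma dominating_indicator_tendsto_0:
  assumes "function_quasi_norm M \<rho>" "dominating M \<rho> (indicator E)"
    and [measurable]: "\<And>n. A n \<in> sets M"
    and "\<And>n. A n \<subseteq> E" "\<And>n. emeasure M (A n) < \<infinity>" "summable (\<lambda>n. measure M (A n))"
  shows "(\<lambda>n. \<rho> (indicator (A n))) \<longlonglongrightarrow> 0"
proof -
  define B where "B n = (\<Union>k\<in>{n..}. A k)" for n
  have B_sets [measurable]: "B n \<in> sets M" for n
    unfolding B_def by auto
  have "AE x in M. eventually (\<lambda>n. x \<notin> A n) sequentially"
    using borel_cantelli_AE1[of A M] assms(3,5,6) by (auto elim!: eventually_mono)
  then have B_to_0: "AE x in M. (\<lambda>n. indicator (B n) x :: ennreal) \<longlonglongrightarrow> 0"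
  proof eventually_elim
    case (elim x)
    then obtain m where "\<And>k. m \<le> k \<Longrightarrow> x \<notin> A k"
      by (auto simp: eventually_sequentially)
    then have "eventually (\<lambda>n. indicator (B n) x = (0::ennreal)) sequentially"
      unfolding B_def eventually_sequentially
      by (intro exI[of _ m]) (auto simp: indicator_def intro: order_trans)
    then show ?case
      by (rule tendsto_eventually)
  qed
  have "B (Suc n) \<subseteq> B n" for n
    unfolding B_def by (force dest: Suc_leD)
  then have B_dec: "AE x in M. \<forall>n. indicator (B (Suc n)) x \<le> (indicator (B n) x :: ennreal)"
    by (intro AE_I2) (auto split: split_indicator)
  have "B 0 \<subseteq> E"
    unfolding B_def using assms(4) by auto
  then have B_0: "AE x in M. indicator (B 0) x \<le> (indicator E x :: ennreal)"
    by (intro AE_I2) (auto split: split_indicator)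
  have B_lim: "(\<lambda>n. \<rho> (indicator (B n))) \<longlonglongrightarrow> 0"
    by (rule dominatingD[OF assms(2) _ B_dec B_0 B_to_0]) simp
  have "A n \<subseteq> B n" for n
    unfolding B_def by auto
  then have A_le_B: "AE x in M. indicator (A n) x \<le> (indicator (B n) x :: ennreal)" for n
    by (intro AE_I2) (auto split: split_indicator)
  have "\<rho> (indicator (A n)) \<le> \<rho> (indicator (B n))" for n
    by (rule function_quasi_norm_mono[OF assms(1) _ _ A_le_B]) simp_all
  then show ?thesis
    using B_lim by (rule ennreal_Lim_null_comparison)
qed

lemma Phi_tendsto_0_if_dominating:
  assumes "function_quasi_norm M \<rho>" "dominating M \<rho> (indicator E)"
  shows "(Phi M E \<rho> \<longlongrightarrow> 0) (at_right 0)"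
proof (rule Phi_tendsto_0_iff[THEN iffD2], intro allI impI, rule ccontr)
  fix a :: ennreal
  assume "0 < a" and large: "\<not> (\<exists>t>0. Phi M E \<rho> t < a)"
  obtain b where "0 < b" "b < a"
    using dense[OF \<open>0 < a\<close>] by blast
  have "a \<le> Phi M E \<rho> t" if "0 < t" for t
    using large that not_less by blast
  then have "b < Phi M E \<rho> ((1/2)^n)" for n
    by (intro less_le_trans[OF \<open>b < a\<close>]) simp
  then have "\<forall>n. \<exists>A. A \<in> sets M \<and> A \<subseteq> E \<and> emeasure M A \<le> ennreal ((1/2)^n) \<and> b < \<rho> (indicator A)"
    unfolding Phi_def less_SUP_iff by blast
  then obtain A where A_sets: "\<And>n. A n \<in> sets M" and A_sub: "\<And>n. A n \<subseteq> E"
    and A_small: "\<And>n. emeasure M (A n) \<le> ennreal ((1/2)^n)"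
    and A_large: "\<And>n. b < \<rho> (indicator (A n))"
    by metis
  have A_finite: "emeasure M (A n) < \<infinity>" for n
    using A_small[of n] by (simp add: le_less_trans)
  have A_summable: "summable (\<lambda>n. measure M (A n))"
  proof (rule summable_comparison_test'[OF summable_geometric[of "1/2::real"]])
    show "norm (measure M (A n)) \<le> (1/2)^n" for n
      using A_small[of n] by (simp add: measure_def enn2real_leI)
  qed simp
  have "(\<lambda>n. \<rho> (indicator (A n))) \<longlonglongrightarrow> 0"
    by (rule dominating_indicator_tendsto_0[OF assms A_sets A_sub A_finite A_summable])
  then have "eventually (\<lambda>n. \<rho> (indicator (A n)) < b) sequentially"
    using \<open>0 < b\<close> by (rule order_tendstoD(2))
  then obtain n where "\<rho> (indicator (A n)) < b"
    unfolding eventually_sequentially by blast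
  with A_large[of n] show False
    by simp
qed

lemma function_quasi_norm_le_truncation:
  assumes "function_quasi_norm M \<rho>" and [measurable]: "E \<in> sets M" "f \<in> borel_measurable M"
    and quasi_triangle: "\<And>f g. f \<in> borel_measurable M \<Longrightarrow> g \<in> borel_measurable M \<Longrightarrow>
       \<rho> (\<lambda>x. f x + g x) \<le> ennreal \<kappa> * (\<rho> f + \<rho> g)"
    and "AE x in M. f x \<le> indicator E x" "0 \<le> \<eta>"
  shows "\<rho> f \<le> ennreal \<kappa> * (\<rho> (indicator E) * ennreal \<eta> +
    \<rho> (indicator {x \<in> space M. x \<in> E \<and> ennreal \<eta> < f x}))"
proof -
  let ?A = "{x \<in> space M. x \<in> E \<and> ennreal \<eta> < f x}"
  have split_f: "AE x in M. f x \<le> ennreal \<eta> * indicator E x + indicator ?A x"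
    using AE_space assms(5)
  proof eventually_elim
    case (elim x)
    then show ?case
      by (cases "ennreal \<eta> < f x")
        (auto simp: not_less intro: add_increasing split: split_indicator)
  qed
  have "\<rho> f \<le> \<rho> (\<lambda>x. ennreal \<eta> * indicator E x + indicator ?A x)"
    by (rule function_quasi_norm_mono[OF assms(1) _ _ split_f]; measurable)
  also have "\<dots> \<le> ennreal \<kappa> * (\<rho> (\<lambda>x. ennreal \<eta> * indicator E x) + \<rho> (indicator ?A))"
    by (rule quasi_triangle) measurable
  also have "\<rho> (\<lambda>x. ennreal \<eta> * indicator E x) = \<rho> (indicator E) * ennreal \<eta>"
    using function_quasi_norm_homogeneous[OF assms(1) _ assms(6), of "indicator E"]
    by (simp add: mult.commute)
  finally show ?thesis .
qed

lemma ennreal_tendsto_0_if_le_approx: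
  fixes u :: "nat \<Rightarrow> ennreal" and g :: "real \<Rightarrow> nat \<Rightarrow> ennreal"
  assumes "c < \<infinity>" "r < \<infinity>"
    and "\<And>\<eta>. 0 < \<eta> \<Longrightarrow> g \<eta> \<longlonglongrightarrow> 0"
    and "\<And>\<eta> n. 0 < \<eta> \<Longrightarrow> u n \<le> c * (r * ennreal \<eta> + g \<eta> n)"
  shows "u \<longlonglongrightarrow> 0"
proof (rule order_tendstoI)
  fix a :: ennreal
  assume "0 < a"
  have "((\<lambda>\<eta>. c * (r * ennreal \<eta>)) \<longlongrightarrow> c * (r * ennreal 0)) (at_right 0)"
    using assms(1,2) by (intro ennreal_tendsto_cmult tendsto_ennrealI tendsto_ident_at) auto
  then have "((\<lambda>\<eta>. c * (r * ennreal \<eta>)) \<longlongrightarrow> 0) (at_right 0)"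
    by simp
  then obtain \<eta> where "0 < \<eta>" and small: "c * (r * ennreal \<eta>) < a"
    using \<open>0 < a\<close> by (rule tendsto_0_at_right_0_ex_less)
  have "(\<lambda>n. c * (r * ennreal \<eta> + g \<eta> n)) \<longlonglongrightarrow> c * (r * ennreal \<eta> + 0)"
    using assms(1,2) assms(3)[OF \<open>0 < \<eta>\<close>]
    by (intro ennreal_tendsto_cmult tendsto_add tendsto_const) auto
  then have "eventually (\<lambda>n. c * (r * ennreal \<eta> + g \<eta> n) < a) sequentially"
    using small by (intro order_tendstoD(2)) auto
  then show "eventually (\<lambda>n. u n < a) sequentially"
    by eventually_elim (rule le_less_trans[OF assms(4)[OF \<open>0 < \<eta>\<close>]])
qed simp

lemma dominating_if_Phi_tendsto_0:
  assumes "function_quasi_norm M \<rho>" and [measurable]: "E \<in> sets M"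
    and "emeasure M E < \<infinity>" "(Phi M E \<rho> \<longlongrightarrow> 0) (at_right 0)"
  shows "dominating M \<rho> (indicator E)"
proof (rule dominatingI)
  show "indicator E \<in> borel_measurable M"
    by simp
  show E_finite: "\<rho> (indicator E) < \<infinity>"
    using assms(1-3) by (rule function_quasi_norm_indicator_finite)
  obtain \<kappa> where quasi_triangle: "\<And>f g. f \<in> borel_measurable M \<Longrightarrow> g \<in> borel_measurable M \<Longrightarrow>
       \<rho> (\<lambda>x. f x + g x) \<le> ennreal \<kappa> * (\<rho> f + \<rho> g)"
    using function_quasi_norm_quasi_triangle[OF assms(1)] by metis
  fix fs :: "nat \<Rightarrow> 'a \<Rightarrow> ennreal"
  assume [measurable]: "\<And>n. fs n \<in> borel_measurable M"
    and fs_dec: "AE x in M. \<forall>n. fs (Suc n) x \<le> fs n x"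
    and fs_0: "AE x in M. fs 0 x \<le> indicator E x"
    and fs_lim: "AE x in M. (\<lambda>n. fs n x) \<longlonglongrightarrow> 0"
  have fs_le_E: "AE x in M. fs n x \<le> indicator E x" for n
    using fs_dec fs_0
  proof eventually_elim
    case (elim x)
    then show ?case
      using lift_Suc_antimono_le[of "\<lambda>n. fs n x" 0 n] by (simp add: order_trans)
  qed
  define A where "A \<eta> n = {x \<in> space M. x \<in> E \<and> ennreal \<eta> < fs n x}" for \<eta> n
  have A_lim: "(\<lambda>n. \<rho> (indicator (A \<eta> n))) \<longlonglongrightarrow> 0" if "0 < \<eta>" for \<eta>
  proof (rule indicator_tendsto_0_if_Phi_tendsto_0[OF assms(4)])
    show "A \<eta> n \<in> sets M" "A \<eta> n \<subseteq> E" for n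
      unfolding A_def by auto
    have "AE x in M. eventually (\<lambda>n. x \<notin> A \<eta> n) sequentially"
      using fs_lim
    proof eventually_elim
      case (elim x)
      then show ?case
        using order_tendstoD(2)[OF elim, of "ennreal \<eta>"] that
        by (auto simp: A_def elim!: eventually_mono)
    qed
    then show "(\<lambda>n. emeasure M (A \<eta> n)) \<longlonglongrightarrow> 0"
      using assms(2,3) by (intro emeasure_tendsto_0_AE_eventually_notin) (auto simp: A_def)
  qed
  have bound: "\<rho> (fs n) \<le> ennreal \<kappa> * (\<rho> (indicator E) * ennreal \<eta> + \<rho> (indicator (A \<eta> n)))"
    if "0 < \<eta>" for \<eta> n
    unfolding A_def using that
    by (intro function_quasi_norm_le_truncation[OF assms(1,2) _ quasi_triangle fs_le_E]) auto
  show "(\<lambda>n. \<rho> (fs n)) \<longlonglongrightarrow> 0"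
    by (rule ennreal_tendsto_0_if_le_approx[OF _ E_finite A_lim bound]) simp_all
qed

theorem corollary3p23:
  fixes M :: "'a measure" and \<rho> :: "('a \<Rightarrow> ennreal) \<Rightarrow> ennreal"
  assumes "sigma_finite_measure M"
    and "function_quasi_norm M \<rho>"
  shows "locally_dominating M \<rho> \<longleftrightarrow>
    (\<forall>E \<in> sets M. emeasure M E < \<infinity> \<longrightarrow> (Phi M E \<rho> \<longlongrightarrow> 0) (at_right 0))"
  unfolding locally_dominating_def
  using Phi_tendsto_0_if_dominating[OF assms(2)] dominating_if_Phi_tendsto_0[OF assms(2)] by blast

end
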